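(* In the setting below, for $p$ in the region of the $z$-plane outside the two loops of $C$, $$\frac{\partial f_{r,s}}{\partial r}(p)=A\left(\frac{p^2-s}{p^2-r}\right)^{1/2},\qquad A=-\frac1{8\pi i}\int_C\frac{z\,\phi(z)\,dz}{(z^2-r)^{3/2}(z^2-s)^{1/2}},$$ and symmetrically $$\frac{\partial f_{r,s}}{\partial s}(p)=B\left(\frac{p^2-r}{p^2-s}\right)^{1/2},\qquad B=-\frac1{8\pi i}\int_C\frac{z\,\phi(z)\,dz}{(z^2-r)^{1/2}(z^2-s)^{3/2}},$$ with square roots taken on the branches consistent with those used in $\alpha(p)$.
   Context: Setting: $z$ is a global coordinate on $\mathbb P^1$; $\phi$ is a holomorphic $\mathbb C^2$-valued function on a disc $N_0$ about $0$ and a disc $N_\infty$ about $\infty$ with $\phi(-z)=-\phi(z)$. For parameters $r$ near $0$ and $s$ near $\infty$ ($r\ne0$, $s\ne\infty$, $r\ne s$) with $\pm\sqrt r\in N_0$, $\pm\sqrt s\in N_\infty$, let $C$ be a fixed contour with two components, a loop in $N_0$ encircling a cut from $\sqrt r$ to $-\sqrt r$ and a loop in $N_\infty$ encircling a cut from $\sqrt s$ to $-\sqrt s$ (the loops stay fixed while $r,s$ vary slightly). Define $$\alpha(p)=\frac{dz}{z-p}\sqrt{\frac{(p^2-r)(p^2-s)}{(z^2-r)(z^2-s)}}\qquad\text{and}\qquad f_{r,s}(p)=\frac1{4\pi i}\int_C\phi(z)\,\alpha(p)$$ for $p$ outside the loops ($\alpha(p)$ is the meromorphic $1$-form on the elliptic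 curve $w^2=(z^2-r)(z^2-s)$ with simple poles of residue $\pm1$ at the two points over $p$). *)

theory Defs
  imports "HOL-Complex_Analysis.Complex_Analysis"
begin

definition cut0 :: "complex \<Rightarrow> complex set" where
  "cut0 r = closed_segment (csqrt r) (- csqrt r)"

text \<open>The cut from sqrt s to - sqrt s passing through infinity: the two rays
  of the line through 0 and sqrt s going from +-sqrt s out to infinity.\<close>
definition cutinf :: "complex \<Rightarrow> complex set" where
  "cutinf s = {complex_of_real t * csqrt s | t. 1 \<le> \<bar>t\<bar>}"

definition branch_dom :: "complex \<Rightarrow> complex \<Rightarrow> complex set" where
  "branch_dom r s = - (cut0 r \<union> cutinf s)"

text \<open>A single-valued branch w of sqrt((z^2-r)(z^2-s)) off the cuts
  (i.e. the coordinate w of the elliptic curve w^2=(z^2-r)(z^2-s)).\<close>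
definition is_sqrt_branch :: "complex \<Rightarrow> complex \<Rightarrow> (complex \<Rightarrow> complex) \<Rightarrow> bool" where
  "is_sqrt_branch r s w \<longleftrightarrow> w holomorphic_on branch_dom r s \<and>
     (\<forall>z\<in>branch_dom r s. (w z)^2 = (z^2 - r) * (z^2 - s))"

definition wbr :: "complex \<Rightarrow> complex \<Rightarrow> complex \<Rightarrow> complex" where
  "wbr r s = (SOME w. is_sqrt_branch r s w)"

text \<open>alpha(p) = alpha_coeff r s p z dz, i.e.
  dz/(z-p) * sqrt((p^2-r)(p^2-s)/((z^2-r)(z^2-s))), both roots on the same branch.\<close>
definition alpha_coeff :: "complex \<Rightarrow> complex \<Rightarrow> complex \<Rightarrow> complex \<Rightarrow> complex" where
  "alpha_coeff r s p z = wbr r s p / ((z - p) * wbr r s z)"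

definition cint :: "(real \<Rightarrow> complex) \<Rightarrow> (real \<Rightarrow> complex) \<Rightarrow> (complex \<Rightarrow> complex) \<Rightarrow> complex" where
  "cint \<gamma>0 \<gamma>1 g = contour_integral \<gamma>0 g + contour_integral \<gamma>1 g"

text \<open>f_{r,s}(p) = 1/(4 pi i) int_C phi alpha(p); phi is C^2-valued, modelled as a pair,
  and the integral is taken componentwise.\<close>
definition f_rs :: "(complex \<Rightarrow> complex \<times> complex) \<Rightarrow> (real \<Rightarrow> complex) \<Rightarrow> (real \<Rightarrow> complex)
    \<Rightarrow> complex \<Rightarrow> complex \<Rightarrow> complex \<Rightarrow> complex \<times> complex" where
  "f_rs \<phi> \<gamma>0 \<gamma>1 r s p =
     (1 / (4 * pi * \<i>) * cint \<gamma>0 \<gamma>1 (\<lambda>z. fst (\<phi> z) * alpha_coeff r s p z),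
      1 / (4 * pi * \<i>) * cint \<gamma>0 \<gamma>1 (\<lambda>z. snd (\<phi> z) * alpha_coeff r s p z))"

text \<open>A = -1/(8 pi i) int_C z phi(z) dz / ((z^2-r)^(3/2) (z^2-s)^(1/2)),
  where (z^2-r)^(3/2)(z^2-s)^(1/2) = (z^2-r) w(z) on the branch w used in alpha.\<close>
definition A_coef :: "(complex \<Rightarrow> complex \<times> complex) \<Rightarrow> (real \<Rightarrow> complex) \<Rightarrow> (real \<Rightarrow> complex)
    \<Rightarrow> complex \<Rightarrow> complex \<Rightarrow> complex \<times> complex" where
  "A_coef \<phi> \<gamma>0 \<gamma>1 r s =
     (- 1 / (8 * pi * \<i>) * cint \<gamma>0 \<gamma>1 (\<lambda>z. z * fst (\<phi> z) / ((z^2 - r) * wbr r s z)),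
      - 1 / (8 * pi * \<i>) * cint \<gamma>0 \<gamma>1 (\<lambda>z. z * snd (\<phi> z) / ((z^2 - r) * wbr r s z)))"

definition B_coef :: "(complex \<Rightarrow> complex \<times> complex) \<Rightarrow> (real \<Rightarrow> complex) \<Rightarrow> (real \<Rightarrow> complex)
    \<Rightarrow> complex \<Rightarrow> complex \<Rightarrow> complex \<times> complex" where
  "B_coef \<phi> \<gamma>0 \<gamma>1 r s =
     (- 1 / (8 * pi * \<i>) * cint \<gamma>0 \<gamma>1 (\<lambda>z. z * fst (\<phi> z) / ((z^2 - s) * wbr r s z)),
      - 1 / (8 * pi * \<i>) * cint \<gamma>0 \<gamma>1 (\<lambda>z. z * snd (\<phi> z) / ((z^2 - s) * wbr r s z)))"

end

theory Submission
  imports Defs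
begin

text \<open>
  The branch domain, i.e. the plane minus both cuts, is connected, so the branch w of
  sqrt((z^2 - r)(z^2 - s)) differs by a constant factor from the explicit branch
  Q(z) = z sqrt(1 - r/z^2) sqrt(1 - z^2/s). Hence alpha(p) = Q(p)/((z - p) Q(z)) on the loops, a
  quotient that depends holomorphically on r and s, and logarithmic differentiation gives
    d alpha(p)/dr = alpha(p) (1/(z^2 - r) - 1/(p^2 - r))/2 = - w(p)/(2(p^2 - r)) (z + p)/((z^2 - r) w(z)),
  and likewise for s. After differentiating under the integral sign the term with p drops out:
  phi(z)/((z^2 - r) w(z)) is even, and each loop is homologous to its mirror image in the region
  where this function is holomorphic, while the reflection z -> -z reverses the sign of the integral.
\<close>

section \<open>The cuts and the branch domain\<close>

lemma square_eq_of_real_ge_1E: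
  fixes w :: complex
  assumes "w^2 = of_real y" "1 \<le> y"
  obtains m where "w = of_real m" "1 \<le> \<bar>m\<bar>"
proof -
  have "w^2 = (of_real (sqrt y))^2"
    using assms by (simp flip: of_real_power)
  then have "w = of_real (sqrt y) \<or> w = of_real (- sqrt y)"
    by (simp add: power2_eq_iff)
  then show ?thesis
    using that assms(2) by fastforce
qed

lemma mem_cut0_iff: "z \<in> cut0 r \<longleftrightarrow> (\<exists>l. \<bar>l\<bar> \<le> 1 \<and> z = of_real l * csqrt r)"
proof -
  have "closed_segment a (- a) = {of_real l * a |l. \<bar>l\<bar> \<le> 1}" for a :: complex
  proof (intro set_eqI iffI)
    fix x assume "x \<in> closed_segment a (- a)"
    then obtain u where "0 \<le> u" "u \<le> 1" "x = (1 - u) *\<^sub>R a + u *\<^sub>R (- a)"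
      unfolding closed_segment_def by auto
    then show "x \<in> {of_real l * a |l. \<bar>l\<bar> \<le> 1}"
      by (intro CollectI exI[of _ "1 - 2 * u"]) (auto simp: scaleR_conv_of_real algebra_simps)
  next
    fix x assume "x \<in> {of_real l * a |l. \<bar>l\<bar> \<le> 1}"
    then obtain l where "\<bar>l\<bar> \<le> 1" "x = of_real l * a"
      by auto
    then show "x \<in> closed_segment a (- a)"
      unfolding closed_segment_def
      by (intro CollectI exI[of _ "(1 - l) / 2"]) (auto simp: scaleR_conv_of_real field_simps)
  qed
  then show ?thesis
    by (auto simp: cut0_def)
qed

lemma mem_cut0_iff_nonpos_Reals: "z \<in> cut0 r \<longleftrightarrow> z = 0 \<or> 1 - r / z^2 \<in> \<real>\<^sub>\<le>\<^sub>0"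
proof (cases "z = 0")
  case True
  then show ?thesis
    by (auto simp: mem_cut0_iff intro: exI[of _ 0])
next
  case False
  show ?thesis
  proof
    assume "z \<in> cut0 r"
    then obtain l where l: "\<bar>l\<bar> \<le> 1" "z = of_real l * csqrt r"
      by (auto simp: mem_cut0_iff)
    with False have "l \<noteq> 0" "r \<noteq> 0"
      by auto
    then have "1 - r / z^2 = of_real (1 - 1 / l^2)"
      using l(2) by (simp add: power_mult_distrib field_simps)
    moreover have "1 \<le> 1 / l^2"
      using l \<open>l \<noteq> 0\<close> by (simp add: abs_square_le_1)
    ultimately show "z = 0 \<or> 1 - r / z^2 \<in> \<real>\<^sub>\<le>\<^sub>0"
      by (simp add: complex_nonpos_Reals_iff)
  next
    assume "z = 0 \<or> 1 - r / z^2 \<in> \<real>\<^sub>\<le>\<^sub>0"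
    with False obtain x where x: "1 - r / z^2 = of_real x" "x \<le> 0"
      by (auto elim: nonpos_Reals_cases)
    then have "(csqrt r / z)^2 = of_real (1 - x)"
      by (simp add: power_divide algebra_simps)
    then obtain m where m: "csqrt r / z = of_real m" "1 \<le> \<bar>m\<bar>"
      using x(2) by (elim square_eq_of_real_ge_1E) auto
    then show "z \<in> cut0 r"
      unfolding mem_cut0_iff using False
      by (intro exI[of _ "1 / m"]) (auto simp: field_simps)
  qed
qed

lemma mem_cutinf_iff_nonpos_Reals:
  assumes "s \<noteq> 0"
  shows "z \<in> cutinf s \<longleftrightarrow> 1 - z^2 / s \<in> \<real>\<^sub>\<le>\<^sub>0"
proof
  assume "z \<in> cutinf s"
  then obtain t where t: "1 \<le> \<bar>t\<bar>" "z = of_real t * csqrt s"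
    by (auto simp: cutinf_def)
  then have "1 - z^2 / s = of_real (1 - t^2)"
    using assms by (simp add: power_mult_distrib)
  moreover have "1 \<le> t^2"
    using t(1) by (simp add: abs_le_square_iff[of 1 t, simplified])
  ultimately show "1 - z^2 / s \<in> \<real>\<^sub>\<le>\<^sub>0"
    by (simp add: complex_nonpos_Reals_iff)
next
  assume "1 - z^2 / s \<in> \<real>\<^sub>\<le>\<^sub>0"
  then obtain x where x: "1 - z^2 / s = of_real x" "x \<le> 0"
    by (auto elim: nonpos_Reals_cases)
  then have "(z / csqrt s)^2 = of_real (1 - x)"
    by (simp add: power_divide algebra_simps)
  then obtain m where m: "z / csqrt s = of_real m" "1 \<le> \<bar>m\<bar>"
    using x(2) by (elim square_eq_of_real_ge_1E) auto
  then show "z \<in> cutinf s"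
    unfolding cutinf_def using assms by (auto simp: field_simps)
qed

lemma uminus_mem_cut0_iff [simp]: "- z \<in> cut0 r \<longleftrightarrow> z \<in> cut0 r"
  by (simp add: mem_cut0_iff_nonpos_Reals)

lemma uminus_mem_cutinf_iff [simp]: "- z \<in> cutinf s \<longleftrightarrow> z \<in> cutinf s"
proof -
  have "- z \<in> cutinf s" if z: "z \<in> cutinf s" for z
  proof -
    obtain t where "1 \<le> \<bar>t\<bar>" "z = of_real t * csqrt s"
      using z unfolding cutinf_def by blast
    then show ?thesis
      unfolding cutinf_def by (intro CollectI exI[of _ "- t"]) auto
  qed
  then show ?thesis
    by force
qed

lemma uminus_mem_branch_dom_iff [simp]: "- z \<in> branch_dom r s \<longleftrightarrow> z \<in> branch_dom r s"
  by (simp add: branch_dom_def)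

lemma mem_branch_dom_iff:
  assumes "s \<noteq> 0"
  shows "z \<in> branch_dom r s \<longleftrightarrow>
    z \<noteq> 0 \<and> 1 - r / z^2 \<notin> \<real>\<^sub>\<le>\<^sub>0 \<and> 1 - z^2 / s \<notin> \<real>\<^sub>\<le>\<^sub>0"
  using assms by (simp add: branch_dom_def mem_cut0_iff_nonpos_Reals mem_cutinf_iff_nonpos_Reals)

lemma zero_notin_branch_dom: "0 \<notin> branch_dom r s"
  by (simp add: branch_dom_def mem_cut0_iff_nonpos_Reals)

lemma branch_dom_square_neq:
  assumes "s \<noteq> 0" "z \<in> branch_dom r s"
  shows "z^2 \<noteq> r" "z^2 \<noteq> s"
  using assms by (auto simp: mem_branch_dom_iff)

lemma open_branch_dom:
  assumes "s \<noteq> 0"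
  shows "open (branch_dom r s)"
proof -
  have "closed ((\<lambda>z. 1 - z^2 / s) -` \<real>\<^sub>\<le>\<^sub>0)"
    using assms by (intro closed_vimage continuous_intros closed_nonpos_Reals_complex) auto
  moreover have "cutinf s = (\<lambda>z. 1 - z^2 / s) -` \<real>\<^sub>\<le>\<^sub>0"
    using assms by (auto simp: mem_cutinf_iff_nonpos_Reals)
  ultimately have "closed (cutinf s)"
    by simp
  then show ?thesis
    unfolding branch_dom_def cut0_def by (intro open_Compl closed_Un closed_segment)
qed

lemma norm_le_if_mem_cut0: "z \<in> cut0 r \<Longrightarrow> norm z \<le> norm (csqrt r)"
  by (auto simp: mem_cut0_iff norm_mult mult_left_le_one_le)

lemma norm_ge_if_mem_cutinf: "z \<in> cutinf s \<Longrightarrow> norm (csqrt s) \<le> norm z"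
  by (auto simp: cutinf_def norm_mult mult_le_cancel_right1)

lemma mem_cut0_if_scaled:
  assumes "1 \<le> k" "of_real k * z \<in> cut0 r"
  shows "z \<in> cut0 r"
proof -
  obtain l where "\<bar>l\<bar> \<le> 1" "of_real k * z = of_real l * csqrt r"
    using assms(2) by (auto simp: mem_cut0_iff)
  with assms(1) show ?thesis
    unfolding mem_cut0_iff by (intro exI[of _ "l / k"]) (auto simp: field_simps)
qed

lemma mem_cutinf_if_scaled:
  assumes "0 < k" "k \<le> 1" "of_real k * z \<in> cutinf s"
  shows "z \<in> cutinf s"
proof -
  obtain t where "1 \<le> \<bar>t\<bar>" "of_real k * z = of_real t * csqrt s"
    using assms(3) by (auto simp: cutinf_def)
  with assms(1,2) show ?thesis
    unfolding cutinf_def by (intro CollectI exI[of _ "t / k"]) (auto simp: field_simps)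
qed

lemma scaled_mem_cutinf:
  assumes "1 \<le> k" "w \<in> cutinf s"
  shows "of_real k * w \<in> cutinf s"
proof -
  obtain t where "1 \<le> \<bar>t\<bar>" "w = of_real t * csqrt s"
    using assms(2) by (auto simp: cutinf_def)
  with assms(1) show ?thesis
    unfolding cutinf_def
    by (intro CollectI exI[of _ "k * t"])
      (auto simp: abs_mult intro: order_trans[OF _ mult_mono[of 1 k 1]])
qed

text \<open>
  Moving a point radially towards the circle of radius c stays off the cuts, because cut0 r is
  star-shaped towards 0 and cutinf s towards infinity.
\<close>

lemma radial_scaling_mem_annulus_Int_branch_dom:
  assumes c: "norm (csqrt r) < c" "c < norm (csqrt s)" and I: "is_interval I" "c \<in> I"
    and z: "norm z \<in> I" "z \<in> branch_dom r s"
    and k: "min 1 (c / norm z) \<le> k" "k \<le> max 1 (c / norm z)"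
  shows "norm (of_real k * z) \<in> I \<and> of_real k * z \<in> branch_dom r s"
proof -
  define x where "x = of_real k * z"
  have "z \<notin> cut0 r" "z \<notin> cutinf s"
    using z(2) by (auto simp: branch_dom_def)
  have "0 < c"
    using c(1) norm_ge_zero by (meson le_less_trans)
  have "0 < norm z"
    using z(2) zero_notin_branch_dom by fastforce
  then have "0 < min 1 (c / norm z)"
    using \<open>0 < c\<close> by simp
  then have "0 < k"
    using k(1) by linarith
  then have nx: "norm x = k * norm z"
    by (simp add: x_def norm_mult)
  have "norm x \<in> I \<and> x \<notin> cut0 r \<and> x \<notin> cutinf s"
  proof (cases "norm z \<le> c")
    case True
    then have "1 \<le> k" "k * norm z \<le> c"
      using k \<open>0 < norm z\<close> by (auto simp: field_simps)
    then have "norm z \<le> norm x" "norm x \<le> c"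
      using nx \<open>0 < norm z\<close> by auto
    then show ?thesis
      using mem_is_interval_1_I[OF I(1) z(1) I(2)] mem_cut0_if_scaled[OF \<open>1 \<le> k\<close>]
        \<open>z \<notin> cut0 r\<close> norm_ge_if_mem_cutinf[of x s] c(2)
      by (auto simp: x_def)
  next
    case False
    then have "k \<le> 1" "c \<le> k * norm z"
      using k \<open>0 < norm z\<close> by (auto simp: field_simps)
    then have "c \<le> norm x" "norm x \<le> norm z"
      using nx \<open>0 < norm z\<close> by (auto simp: mult_le_cancel_right1)
    then show ?thesis
      using mem_is_interval_1_I[OF I(1) I(2) z(1)] mem_cutinf_if_scaled[OF \<open>0 < k\<close> \<open>k \<le> 1\<close>]
        \<open>z \<notin> cutinf s\<close> norm_le_if_mem_cut0[of x r] c(1)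
      by (auto simp: x_def)
  qed
  then show ?thesis
    by (simp add: x_def branch_dom_def)
qed

text \<open>
  Each point is joined radially to the circle of radius c, which avoids both cuts.
\<close>

lemma connected_annulus_Int_branch_dom:
  assumes c: "norm (csqrt r) < c" "c < norm (csqrt s)" and I: "is_interval I" "c \<in> I"
  shows "connected ({z. norm z \<in> I} \<inter> branch_dom r s)"
proof -
  define \<Omega> where "\<Omega> = {z. norm z \<in> I} \<inter> branch_dom r s"
  have "0 < c"
    using c(1) norm_ge_zero by (meson le_less_trans)
  have circle: "sphere 0 c \<subseteq> \<Omega>"
    using c I(2) norm_le_if_mem_cut0 norm_ge_if_mem_cutinf
    by (fastforce simp: \<Omega>_def branch_dom_def)
  define seg where
    "seg z = (\<lambda>k. of_real k * z) ` {min 1 (c / norm z)..max 1 (c / norm z)}" for z :: complex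
  have seg: "seg z \<subseteq> \<Omega>" if "z \<in> \<Omega>" for z
    using that radial_scaling_mem_annulus_Int_branch_dom[OF c I] by (auto simp: seg_def \<Omega>_def)
  have "\<Omega> = (\<Union>z\<in>\<Omega>. seg z \<union> sphere 0 c)"
    using seg circle by (force simp: seg_def)
  moreover have "connected (\<Union>z\<in>\<Omega>. seg z \<union> sphere 0 c)"
  proof (rule connected_Union)
    fix S assume "S \<in> (\<lambda>z. seg z \<union> sphere 0 c) ` \<Omega>"
    then obtain z where z: "z \<in> \<Omega>" "S = seg z \<union> sphere 0 c"
      by blast
    then have "z \<noteq> 0"
      using zero_notin_branch_dom by (auto simp: \<Omega>_def)
    have "of_real (c / norm z) * z \<in> seg z"
      unfolding seg_def by (rule imageI) auto
    moreover have "of_real (c / norm z) * z \<in> sphere 0 c"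
      using \<open>z \<noteq> 0\<close> \<open>0 < c\<close> by (simp add: norm_mult del: of_real_divide)
    moreover have "connected (seg z)"
      unfolding seg_def by (intro connected_continuous_image continuous_intros) auto
    ultimately show "connected S"
      unfolding z(2) by (intro connected_Un connected_sphere) auto
  next
    have "of_real c \<in> sphere (0::complex) c"
      using \<open>0 < c\<close> by simp
    then show "\<Inter> ((\<lambda>z. seg z \<union> sphere 0 c) ` \<Omega>) \<noteq> {}"
      by blast
  qed
  ultimately show ?thesis
    by (simp add: \<Omega>_def)
qed

section \<open>An explicit branch of w\<close>

text \<open>
  Up to the constant factor csqrt (- s) this is a branch of w; unlike the branch wbr, which is
  chosen independently for each pair (r, s), it depends holomorphically on r and s.
\<close>

definition branch_root :: "complex \<Rightarrow> complex \<Rightarrow> complex \<Rightarrow> complex" where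
  "branch_root r s z = z * csqrt (1 - r / z^2) * csqrt (1 - z^2 / s)"

lemma branch_root_square:
  assumes "s \<noteq> 0" "z \<noteq> 0"
  shows "- s * (branch_root r s z)^2 = (z^2 - r) * (z^2 - s)"
  using assms by (simp add: branch_root_def power_mult_distrib field_simps)

lemma branch_root_minus [simp]: "branch_root r s (- z) = - branch_root r s z"
  by (simp add: branch_root_def)

lemma branch_root_nonzero:
  assumes "s \<noteq> 0" "z \<in> branch_dom r s"
  shows "branch_root r s z \<noteq> 0"
  using assms by (auto simp: branch_root_def mem_branch_dom_iff)

lemma holomorphic_on_branch_root:
  assumes "s \<noteq> 0"
  shows "branch_root r s holomorphic_on branch_dom r s"
  unfolding branch_root_def using assms
  by (intro holomorphic_intros) (auto simp: mem_branch_dom_iff)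

lemma square_multiple_imp_const_multiple:
  fixes f g :: "'a::topological_space \<Rightarrow> complex"
  assumes "connected U" "continuous_on U f" "continuous_on U g"
    and "\<And>z. z \<in> U \<Longrightarrow> g z \<noteq> 0" "\<And>z. z \<in> U \<Longrightarrow> (f z)^2 = c * (g z)^2"
  obtains \<kappa> where "\<And>z. z \<in> U \<Longrightarrow> f z = \<kappa> * g z"
proof -
  have "(f z / g z)^2 = c" if "z \<in> U" for z
    using assms(4,5) that by (simp add: power_divide)
  then have "(\<lambda>z. f z / g z) ` U \<subseteq> {csqrt c, - csqrt c}"
    by (auto simp: power2_eq_iff[of _ "csqrt c", simplified])
  then have "(\<lambda>z. f z / g z) constant_on U"
    using assms(1-4)
    by (intro continuous_finite_range_constant continuous_intros) (auto intro: finite_subset)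
  then obtain \<kappa> where "\<And>z. z \<in> U \<Longrightarrow> f z / g z = \<kappa>"
    by (auto simp: constant_on_def)
  then show ?thesis
    using that assms(4) by (simp add: field_simps)
qed

lemma is_sqrt_branch_wbr:
  assumes "s \<noteq> 0"
  shows "is_sqrt_branch r s (wbr r s)"
proof -
  have "(csqrt (- s) * branch_root r s z)^2 = (z^2 - r) * (z^2 - s)"
    if "z \<in> branch_dom r s" for z
  proof -
    have "z \<noteq> 0"
      using that assms by (simp add: mem_branch_dom_iff)
    then show ?thesis
      unfolding power_mult_distrib power2_csqrt by (rule branch_root_square[OF assms])
  qed
  then have "is_sqrt_branch r s (\<lambda>z. csqrt (- s) * branch_root r s z)"
    unfolding is_sqrt_branch_def using holomorphic_on_branch_root[OF assms]
    by (auto intro!: holomorphic_intros)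
  then show ?thesis
    unfolding wbr_def by (rule someI[of "is_sqrt_branch r s"])
qed

lemma holomorphic_on_wbr:
  assumes "s \<noteq> 0"
  shows "wbr r s holomorphic_on branch_dom r s"
  using is_sqrt_branch_wbr[OF assms] by (simp add: is_sqrt_branch_def)

lemma wbr_nonzero:
  assumes "s \<noteq> 0" "z \<in> branch_dom r s"
  shows "wbr r s z \<noteq> 0"
  using is_sqrt_branch_wbr[OF assms(1)] assms branch_dom_square_neq[OF assms]
  by (fastforce simp: is_sqrt_branch_def)

lemma wbr_eq_const_mult_branch_root:
  assumes "norm r < norm s"
  obtains \<kappa> where "\<And>z. z \<in> branch_dom r s \<Longrightarrow> wbr r s z = \<kappa> * branch_root r s z"
proof -
  have "s \<noteq> 0"
    using assms by auto
  define c where "c = (norm (csqrt r) + norm (csqrt s)) / 2"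
  have "connected ({z. norm z \<in> UNIV} \<inter> branch_dom r s)"
    using assms by (intro connected_annulus_Int_branch_dom[of r c]) (auto simp: c_def)
  then have "connected (branch_dom r s)"
    by simp
  moreover have "continuous_on (branch_dom r s) (wbr r s)"
    "continuous_on (branch_dom r s) (branch_root r s)"
    using holomorphic_on_wbr holomorphic_on_branch_root \<open>s \<noteq> 0\<close>
    by (auto intro: holomorphic_on_imp_continuous_on)
  moreover have "branch_root r s z \<noteq> 0" if "z \<in> branch_dom r s" for z
    using branch_root_nonzero \<open>s \<noteq> 0\<close> that by blast
  moreover have "(wbr r s z)^2 = - s * (branch_root r s z)^2" if "z \<in> branch_dom r s" for z
  proof -
    have "z \<noteq> 0"
      using that \<open>s \<noteq> 0\<close> by (simp add: mem_branch_dom_iff)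
    then show ?thesis
      using is_sqrt_branch_wbr[OF \<open>s \<noteq> 0\<close>] that branch_root_square[OF \<open>s \<noteq> 0\<close>, of z r]
      by (simp add: is_sqrt_branch_def)
  qed
  ultimately show ?thesis
    using that by (rule square_multiple_imp_const_multiple[where c = "- s"])
qed

lemma wbr_minus:
  assumes "norm r < norm s" "z \<in> branch_dom r s"
  shows "wbr r s (- z) = - wbr r s z"
proof -
  obtain \<kappa> where "\<And>z. z \<in> branch_dom r s \<Longrightarrow> wbr r s z = \<kappa> * branch_root r s z"
    using wbr_eq_const_mult_branch_root[OF assms(1)] by blast
  then show ?thesis
    using assms(2) by simp
qed

definition alpha_ratio :: "complex \<Rightarrow> complex \<Rightarrow> complex \<Rightarrow> complex \<Rightarrow> complex" where
  "alpha_ratio r s p z = branch_root r s p / ((z - p) * branch_root r s z)"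

lemma alpha_coeff_eq_alpha_ratio:
  assumes "norm r < norm s" "p \<in> branch_dom r s" "z \<in> branch_dom r s"
  shows "alpha_coeff r s p z = alpha_ratio r s p z"
proof -
  obtain \<kappa> where \<kappa>: "\<And>z. z \<in> branch_dom r s \<Longrightarrow> wbr r s z = \<kappa> * branch_root r s z"
    using wbr_eq_const_mult_branch_root[OF assms(1)] by blast
  have "s \<noteq> 0"
    using assms(1) by auto
  then have "\<kappa> \<noteq> 0"
    using wbr_nonzero[OF _ assms(2)] \<kappa>[OF assms(2)] by auto
  then show ?thesis
    using assms(2,3) by (simp add: alpha_coeff_def alpha_ratio_def \<kappa>)
qed

section \<open>Even functions integrate to zero over symmetric cycles\<close>

lemma winding_number_negatepath_eq:
  assumes "valid_path \<gamma>" "- w \<notin> path_image \<gamma>"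
  shows "winding_number (uminus \<circ> \<gamma>) w = winding_number \<gamma> (- w)"
proof -
  have "(\<lambda>t. - \<gamma> t - w) = uminus \<circ> ((+) w \<circ> \<gamma>)"
    by (auto simp: fun_eq_iff)
  then have "winding_number (uminus \<circ> \<gamma>) w = winding_number (uminus \<circ> ((+) w \<circ> \<gamma>)) 0"
    by (subst winding_number_offset) (simp add: o_def)
  also have "\<dots> = winding_number ((+) w \<circ> \<gamma>) 0"
    using assms by (intro winding_number_negatepath)
      (auto simp: valid_path_translation_eq path_image_compose add_eq_0_iff)
  also have "\<dots> = winding_number \<gamma> (- w)"
    by (subst winding_number_offset[of \<gamma>]) (simp add: o_def add.commute)
  finally show ?thesis .
qed

text \<open>
  For even g the integral over the reflected path is minus the integral over \<gamma>, while the two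
  paths are homologous in U. Closing up \<gamma> and the reversed reflection with a path \<sigma> from
  \<gamma>(0) to its mirror point gives a cycle of winding number zero outside U.
\<close>

lemma contour_integral_even_eq_0:
  assumes U: "open U" "connected U" "\<And>z. z \<in> U \<Longrightarrow> - z \<in> U"
    and g: "g holomorphic_on U" "\<And>z. z \<in> U \<Longrightarrow> g (- z) = g z"
    and \<gamma>: "valid_path \<gamma>" "pathfinish \<gamma> = pathstart \<gamma>" "path_image \<gamma> \<subseteq> U"
    and wn: "\<And>w. w \<notin> U \<Longrightarrow> winding_number \<gamma> (- w) = winding_number \<gamma> w"
  shows "contour_integral \<gamma> g = 0"
proof -
  define x where "x = pathstart \<gamma>"
  have "x \<in> U"
    using \<gamma>(3) pathstart_in_path_image unfolding x_def by blast
  then obtain \<sigma> where \<sigma>: "polynomial_function \<sigma>" "path_image \<sigma> \<subseteq> U"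
    "pathstart \<sigma> = x" "pathfinish \<sigma> = - x"
    using connected_open_polynomial_connected[OF U(1,2)] U(3) by metis
  define \<gamma>' where "\<gamma>' = uminus \<circ> \<gamma>"
  have \<gamma>': "valid_path \<gamma>'" "pathstart \<gamma>' = - x" "pathfinish \<gamma>' = - x" "path_image \<gamma>' \<subseteq> U"
    using \<gamma> U(3) by (auto simp: \<gamma>'_def x_def pathstart_def pathfinish_def path_image_compose)
  have "valid_path \<sigma>"
    using \<sigma>(1) by (rule valid_path_polynomial_function)
  define \<Gamma> where "\<Gamma> = \<gamma> +++ \<sigma> +++ reversepath \<gamma>' +++ reversepath \<sigma>"
  have paths: "path \<gamma>" "path \<sigma>" "path \<gamma>'"
    using \<gamma>(1) \<gamma>'(1) \<open>valid_path \<sigma>\<close> valid_path_imp_path by auto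
  have "(g has_contour_integral 0) \<Gamma>"
  proof (rule Cauchy_theorem_global[OF U(1) g(1)])
    show "valid_path \<Gamma>" "pathfinish \<Gamma> = pathstart \<Gamma>" "path_image \<Gamma> \<subseteq> U"
      using \<gamma> \<gamma>' \<sigma> \<open>valid_path \<sigma>\<close> by (auto simp: \<Gamma>_def x_def path_image_join)
    fix w assume "w \<notin> U"
    then have "w \<notin> path_image \<gamma> \<union> path_image \<sigma> \<union> path_image \<gamma>'"
      using \<gamma>(3) \<sigma>(2) \<gamma>'(4) by blast
    then have "winding_number \<Gamma> w = winding_number \<gamma> w - winding_number \<gamma>' w"
      using paths \<gamma> \<gamma>' \<sigma> by (simp add: \<Gamma>_def x_def winding_number_join winding_number_reversepath
          not_in_path_image_join)
    also have "winding_number \<gamma>' w = winding_number \<gamma> (- w)"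
    proof -
      have "- w \<notin> path_image \<gamma>"
        using \<gamma>(3) U(3) \<open>w \<notin> U\<close> by (metis minus_minus subsetD)
      then show ?thesis
        unfolding \<gamma>'_def by (rule winding_number_negatepath_eq[OF \<gamma>(1)])
    qed
    finally show "winding_number \<Gamma> w = 0"
      using wn[OF \<open>w \<notin> U\<close>] by simp
  qed
  moreover have "g contour_integrable_on \<gamma>" "g contour_integrable_on \<sigma>" "g contour_integrable_on \<gamma>'"
    using \<gamma> \<gamma>' \<sigma>(2) \<open>valid_path \<sigma>\<close> by (auto intro!: contour_integrable_holomorphic_simple[OF g(1) U(1)])
  moreover have "contour_integral \<gamma>' g = - contour_integral \<gamma> g"
    unfolding \<gamma>'_def contour_integral_negatepath[OF \<gamma>(1)]
    using g(2) \<gamma>(3) by (auto intro!: contour_integral_eq)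
  ultimately show ?thesis
    using \<gamma> \<gamma>' \<sigma> \<open>valid_path \<sigma>\<close>
    by (auto simp: \<Gamma>_def x_def contour_integral_join contour_integral_reversepath valid_path_join
        contour_integrable_joinI contour_integrable_reversepath dest!: contour_integral_unique)
qed

lemma winding_number_zero_if_unbounded_connected:
  assumes "path \<gamma>" "pathfinish \<gamma> = pathstart \<gamma>"
    and "connected C" "\<not> bounded C" "C \<inter> path_image \<gamma> = {}" "w \<in> C"
  shows "winding_number \<gamma> w = 0"
proof (rule winding_number_zero_in_outside[OF assms(1,2)])
  have "C \<subseteq> connected_component_set (- path_image \<gamma>) w"
    using assms(3,5,6) by (intro connected_component_maximal) auto
  then show "w \<in> outside (path_image \<gamma>)"
    using assms(4-6) bounded_subset by (auto simp: outside_def)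
qed

section \<open>Differentiation under the contour integral\<close>

lemma polynomial_path_with_same_integrals:
  assumes "open S" "valid_path \<gamma>" "path_image \<gamma> \<subseteq> S"
  obtains g where "polynomial_function g" "path_image g \<subseteq> S"
    "\<And>f. f holomorphic_on S \<Longrightarrow> contour_integral \<gamma> f = contour_integral g f"
proof -
  obtain d where "0 < d" and near: "\<And>g h. valid_path g \<and> valid_path h \<and>
      (\<forall>t\<in>{0..1}. norm (g t - \<gamma> t) < d \<and> norm (h t - \<gamma> t) < d) \<and>
      pathstart h = pathstart g \<and> pathfinish h = pathfinish g \<Longrightarrow>
      path_image g \<subseteq> S \<and> path_image h \<subseteq> S \<and>
      (\<forall>f. f holomorphic_on S \<longrightarrow> contour_integral h f = contour_integral g f)"
    using contour_integral_nearby_ends[OF assms(1) valid_path_imp_path[OF assms(2)] assms(3)] by blast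
  obtain g where g: "polynomial_function g" "pathstart g = pathstart \<gamma>" "pathfinish g = pathfinish \<gamma>"
    "\<And>t. t \<in> {0..1} \<Longrightarrow> norm (g t - \<gamma> t) < d"
    using path_approx_polynomial_function[OF valid_path_imp_path[OF assms(2)] \<open>0 < d\<close>] by blast
  have "path_image g \<subseteq> S \<and> path_image \<gamma> \<subseteq> S \<and>
      (\<forall>f. f holomorphic_on S \<longrightarrow> contour_integral \<gamma> f = contour_integral g f)"
    using g assms(2) \<open>0 < d\<close> by (intro near) (auto intro: valid_path_polynomial_function)
  then show ?thesis
    using that g(1) by blast
qed

lemma has_field_derivative_contour_integral_polynomial_path:
  fixes a a' :: "complex \<Rightarrow> complex \<Rightarrow> complex"
  assumes g: "polynomial_function g" "path_image g \<subseteq> S"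
    and U: "open U" "convex U" "c \<in> U"
    and hol: "\<And>y. y \<in> U \<Longrightarrow> a y holomorphic_on S"
    and der: "\<And>y z. y \<in> U \<Longrightarrow> z \<in> S \<Longrightarrow> ((\<lambda>y. a y z) has_field_derivative a' y z) (at y)"
    and cont: "continuous_on (U \<times> S) (\<lambda>(y, z). a' y z)"
  shows "((\<lambda>y. contour_integral g (a y)) has_field_derivative contour_integral g (a' c)) (at c)"
proof -
  obtain g' where g': "polynomial_function g'" "\<And>t. (g has_vector_derivative g' t) (at t)"
    using has_vector_derivative_polynomial_function[OF g(1)] by blast
  have cint_g: "contour_integral g f = integral (cbox 0 1) (\<lambda>t. f (g t) * g' t)" for f
    by (simp add: contour_integral_integral vector_derivative_at[OF g'(2)])
  have gS: "g t \<in> S" if "t \<in> cbox 0 1" for t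
    using g(2) that by (auto simp: path_image_def)
  have cont_g: "continuous_on (cbox 0 1) g" "continuous_on (cbox 0 1) g'"
    using g(1) g'(1) by (auto intro: continuous_on_polymonial_function)
  have "((\<lambda>y. integral (cbox 0 1) (\<lambda>t. a y (g t) * g' t)) has_field_derivative
      integral (cbox 0 1) (\<lambda>t. a' c (g t) * g' t)) (at c within U)"
  proof (rule leibniz_rule_field_derivative[where f = "\<lambda>y t. a y (g t) * g' t"
        and fx = "\<lambda>y t. a' y (g t) * g' t", OF _ _ _ U(3,2)])
    show "((\<lambda>y. a y (g t) * g' t) has_field_derivative a' y (g t) * g' t) (at y within U)"
      if "y \<in> U" "t \<in> cbox 0 1" for y t
      by (rule DERIV_cmult_right[OF has_field_derivative_at_within[OF der[OF that(1) gS[OF that(2)]]]])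
    show "(\<lambda>t. a y (g t) * g' t) integrable_on cbox 0 1" if "y \<in> U" for y
    proof -
      have "continuous_on (cbox 0 1) (\<lambda>t. a y (g t))"
        by (rule continuous_on_compose2[OF holomorphic_on_imp_continuous_on[OF hol[OF that]] cont_g(1)])
          (use gS in auto)
      then show ?thesis
        by (intro integrable_continuous continuous_on_mult cont_g(2))
    qed
    have "continuous_on (U \<times> cbox 0 1) (\<lambda>x. g (snd x))"
      by (rule continuous_on_compose2[OF cont_g(1) continuous_on_snd]) auto
    then have "continuous_on (U \<times> cbox 0 1) (\<lambda>x. (fst x, g (snd x)))"
      by (intro continuous_on_Pair continuous_on_fst continuous_on_id)
    moreover have "(\<lambda>x. (fst x, g (snd x))) ` (U \<times> cbox 0 1) \<subseteq> U \<times> S"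
      using gS by auto
    ultimately have "continuous_on (U \<times> cbox 0 1) (\<lambda>x. a' (fst x) (g (snd x)))"
      using continuous_on_compose2[OF cont] by fastforce
    moreover have "continuous_on (U \<times> cbox 0 1) (\<lambda>x. g' (snd x))"
      by (rule continuous_on_compose2[OF cont_g(2) continuous_on_snd]) auto
    ultimately show "continuous_on (U \<times> cbox 0 1) (\<lambda>(y, t). a' y (g t) * g' t)"
      by (simp add: case_prod_unfold continuous_on_mult)
  qed
  then show ?thesis
    using at_within_open[OF U(3,1)] by (simp add: cint_g)
qed

text \<open>
  Leibniz's rule needs a continuous velocity, which a valid path need not have, so \<gamma> is first
  replaced by a polynomial path with the same integrals of functions holomorphic on S.
\<close>

lemma has_field_derivative_contour_integral_param:
  fixes a a' :: "complex \<Rightarrow> complex \<Rightarrow> complex"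
  assumes S: "open S" and \<gamma>: "valid_path \<gamma>" "path_image \<gamma> \<subseteq> S"
    and U: "open U" "convex U" "c \<in> U"
    and hol: "\<And>y. y \<in> U \<Longrightarrow> a y holomorphic_on S" and hol': "a' c holomorphic_on S"
    and der: "\<And>y z. y \<in> U \<Longrightarrow> z \<in> S \<Longrightarrow> ((\<lambda>y. a y z) has_field_derivative a' y z) (at y)"
    and cont: "continuous_on (U \<times> S) (\<lambda>(y, z). a' y z)"
  shows "((\<lambda>y. contour_integral \<gamma> (a y)) has_field_derivative contour_integral \<gamma> (a' c)) (at c)"
proof -
  obtain g where g: "polynomial_function g" "path_image g \<subseteq> S"
    and same: "\<And>f. f holomorphic_on S \<Longrightarrow> contour_integral \<gamma> f = contour_integral g f"
    using polynomial_path_with_same_integrals[OF S \<gamma>] by blast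
  have "((\<lambda>y. contour_integral g (a y)) has_field_derivative contour_integral \<gamma> (a' c)) (at c)"
    using has_field_derivative_contour_integral_polynomial_path[OF g U hol der cont] same[OF hol']
    by simp
  then show ?thesis
    by (rule has_field_derivative_transform_within_open[OF _ U(1,3)]) (use same hol in auto)
qed

text \<open>
  The family b only has to agree with the smooth family a near {c} \<times> K, where K is the union of
  the path images; this is how alpha_coeff, whose branch wbr is chosen independently for each
  (r, s), is handled.
\<close>

lemma has_field_derivative_cint_family:
  fixes a a' b :: "complex \<Rightarrow> complex \<Rightarrow> complex"
  assumes G: "open G" "{c} \<times> (path_image \<gamma>0 \<union> path_image \<gamma>1) \<subseteq> G"
    and \<gamma>: "valid_path \<gamma>0" "valid_path \<gamma>1"
    and eq: "\<And>y z. (y, z) \<in> G \<Longrightarrow> b y z = a y z"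
    and hol: "\<And>y z. (y, z) \<in> G \<Longrightarrow> a y field_differentiable at z"
    and hol': "\<And>z. (c, z) \<in> G \<Longrightarrow> a' c field_differentiable at z"
    and der: "\<And>y z. (y, z) \<in> G \<Longrightarrow> ((\<lambda>y. a y z) has_field_derivative a' y z) (at y)"
    and cont: "continuous_on G (\<lambda>(y, z). a' y z)"
  shows "((\<lambda>y. cint \<gamma>0 \<gamma>1 (b y)) has_field_derivative cint \<gamma>0 \<gamma>1 (a' c)) (at c)"
proof -
  define K where "K = path_image \<gamma>0 \<union> path_image \<gamma>1"
  have "compact K"
    unfolding K_def using \<gamma> by (intro compact_Un compact_valid_path_image)
  then obtain U S where US: "open U" "open S" "c \<in> U" "K \<subseteq> S" "U \<times> S \<subseteq> G"
    using tube_lemma_right[of euclidean euclidean G K c] G by (auto simp: K_def)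
  then obtain \<delta> where "0 < \<delta>" "ball c \<delta> \<subseteq> U"
    using open_contains_ball by blast
  with US have sub: "(y, z) \<in> G" if "y \<in> ball c \<delta>" "z \<in> S" for y z
    using that by blast
  have "((\<lambda>y. contour_integral \<gamma> (a y)) has_field_derivative contour_integral \<gamma> (a' c)) (at c)"
    if "valid_path \<gamma>" "path_image \<gamma> \<subseteq> K" for \<gamma>
  proof (rule has_field_derivative_contour_integral_param[OF US(2) that(1) _ open_ball convex_ball])
    show "path_image \<gamma> \<subseteq> S" "c \<in> ball c \<delta>"
      using that(2) US(4) \<open>0 < \<delta>\<close> by auto
    show "a y holomorphic_on S" if "y \<in> ball c \<delta>" for y
      unfolding holomorphic_on_def using hol[OF sub[OF that]] by (simp add: field_differentiable_at_within)
    show "a' c holomorphic_on S"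
      unfolding holomorphic_on_def using hol'[OF sub] \<open>0 < \<delta>\<close> by (simp add: field_differentiable_at_within)
    show "((\<lambda>y. a y z) has_field_derivative a' y z) (at y)" if "y \<in> ball c \<delta>" "z \<in> S" for y z
      using der[OF sub[OF that]] .
    show "continuous_on (ball c \<delta> \<times> S) (\<lambda>(y, z). a' y z)"
      using cont by (rule continuous_on_subset) (auto intro: sub)
  qed
  note deriv = this
  have "((\<lambda>y. cint \<gamma>0 \<gamma>1 (a y)) has_field_derivative cint \<gamma>0 \<gamma>1 (a' c)) (at c)"
    unfolding cint_def by (intro DERIV_add deriv \<gamma>) (auto simp: K_def)
  then show ?thesis
  proof (rule has_field_derivative_transform_within_open[OF _ open_ball])
    show "c \<in> ball c \<delta>"
      using \<open>0 < \<delta>\<close> by simp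
    show "cint \<gamma>0 \<gamma>1 (a y) = cint \<gamma>0 \<gamma>1 (b y)" if "y \<in> ball c \<delta>" for y
    proof -
      have "a y z = b y z" if "z \<in> K" for z
        using eq[OF sub[OF \<open>y \<in> ball c \<delta>\<close> subsetD[OF US(4) that]]] by simp
      then show ?thesis
        unfolding cint_def K_def by (simp cong: contour_integral_cong)
    qed
  qed
qed

section \<open>Parameter derivatives of alpha\<close>

lemma DERIV_quotient_logarithmic:
  assumes "(f has_field_derivative f x * A) (at x)" "(g has_field_derivative g x * B) (at x)"
    and "g x \<noteq> 0" "k \<noteq> 0"
  shows "((\<lambda>x. f x / (k * g x)) has_field_derivative f x / (k * g x) * (A - B)) (at x)"
proof (rule DERIV_cong[OF DERIV_divide[OF assms(1) DERIV_cmult[OF assms(2)]]])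
  show "k * g x \<noteq> 0"
    using assms(3,4) by simp
  show "(f x * A * (k * g x) - f x * (k * (g x * B))) / (k * g x * (k * g x)) =
      f x / (k * g x) * (A - B)"
    using assms(3,4) by (simp add: field_simps)
qed

lemma has_field_derivative_branch_root_r:
  assumes "s \<noteq> 0" "z \<in> branch_dom r s"
  shows "((\<lambda>r. branch_root r s z) has_field_derivative
    branch_root r s z * (- (1 / (z^2 - r)) / 2)) (at r)"
proof -
  define u where "u = csqrt (1 - r / z^2)"
  have z: "z \<noteq> 0" "1 - r / z^2 \<notin> \<real>\<^sub>\<le>\<^sub>0"
    using assms by (auto simp: mem_branch_dom_iff)
  then have "u \<noteq> 0" "z^2 - r = z^2 * u^2"
    by (auto simp: u_def field_simps)
  have "((\<lambda>r. 1 - r / z^2) has_field_derivative - (1 / z^2)) (at r)"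
    by (rule DERIV_cong[OF DERIV_diff[OF DERIV_const DERIV_cdivide[OF DERIV_ident]]]) simp
  then have "((\<lambda>r. branch_root r s z) has_field_derivative
      z * (- (1 / z^2) / (2 * u)) * csqrt (1 - z^2 / s)) (at r)"
    unfolding branch_root_def u_def
    by (intro DERIV_cmult_right DERIV_cmult has_field_derivative_csqrt' z(2))
  moreover have "z * (- (1 / z^2) / (2 * u)) * csqrt (1 - z^2 / s) =
      branch_root r s z * (- (1 / (z^2 - r)) / 2)"
    using z(1) \<open>u \<noteq> 0\<close> unfolding branch_root_def u_def[symmetric] \<open>z^2 - r = _\<close>
    by (simp add: field_simps power2_eq_square)
  ultimately show ?thesis
    by (rule DERIV_cong)
qed

lemma has_field_derivative_branch_root_s:
  assumes "s \<noteq> 0" "z \<in> branch_dom r s"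
  shows "((\<lambda>s. branch_root r s z) has_field_derivative
    branch_root r s z * ((- (1 / (z^2 - s)) - 1 / s) / 2)) (at s)"
proof -
  define v where "v = csqrt (1 - z^2 / s)"
  have z: "1 - z^2 / s \<notin> \<real>\<^sub>\<le>\<^sub>0"
    using assms by (auto simp: mem_branch_dom_iff)
  then have "v \<noteq> 0" "z^2 = s * (1 - v^2)" "s * (1 - v^2) - s = - (s * v^2)"
    using assms(1) by (auto simp: v_def field_simps)
  have "((\<lambda>s. 1 - z^2 / s) has_field_derivative z^2 / s^2) (at s)"
    using assms(1) by (auto intro!: derivative_eq_intros simp: power2_eq_square)
  then have "((\<lambda>s. branch_root r s z) has_field_derivative
      z * csqrt (1 - r / z^2) * (z^2 / s^2 / (2 * v))) (at s)"
    unfolding branch_root_def v_def by (intro DERIV_cmult has_field_derivative_csqrt' z)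
  moreover have "z * csqrt (1 - r / z^2) * (z^2 / s^2 / (2 * v)) =
      branch_root r s z * ((- (1 / (z^2 - s)) - 1 / s) / 2)"
    using assms(1) \<open>v \<noteq> 0\<close> unfolding branch_root_def v_def[symmetric]
    by (simp only: \<open>z^2 = _\<close> \<open>s * (1 - v^2) - s = _\<close>) (simp add: field_simps power2_eq_square)
  ultimately show ?thesis
    by (rule DERIV_cong)
qed

lemma has_field_derivative_alpha_ratio_r:
  assumes "s \<noteq> 0" "p \<in> branch_dom r s" "z \<in> branch_dom r s" "z \<noteq> p"
  shows "((\<lambda>r. alpha_ratio r s p z) has_field_derivative
    alpha_ratio r s p z * ((1 / (z^2 - r) - 1 / (p^2 - r)) / 2)) (at r)"
proof -
  have "((\<lambda>r. alpha_ratio r s p z) has_field_derivative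
      alpha_ratio r s p z * (- (1 / (p^2 - r)) / 2 - - (1 / (z^2 - r)) / 2)) (at r)"
    unfolding alpha_ratio_def using assms
    by (intro DERIV_quotient_logarithmic has_field_derivative_branch_root_r branch_root_nonzero) auto
  then show ?thesis
    by (simp add: diff_divide_distrib)
qed

lemma has_field_derivative_alpha_ratio_s:
  assumes "s \<noteq> 0" "p \<in> branch_dom r s" "z \<in> branch_dom r s" "z \<noteq> p"
  shows "((\<lambda>s. alpha_ratio r s p z) has_field_derivative
    alpha_ratio r s p z * ((1 / (z^2 - s) - 1 / (p^2 - s)) / 2)) (at s)"
proof -
  have "((\<lambda>s. alpha_ratio r s p z) has_field_derivative alpha_ratio r s p z *
      ((- (1 / (p^2 - s)) - 1 / s) / 2 - (- (1 / (z^2 - s)) - 1 / s) / 2)) (at s)"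
    unfolding alpha_ratio_def using assms
    by (intro DERIV_quotient_logarithmic has_field_derivative_branch_root_s branch_root_nonzero) auto
  then show ?thesis
    by (simp add: diff_divide_distrib)
qed

lemma holomorphic_on_alpha_ratio:
  assumes "s \<noteq> 0"
  shows "alpha_ratio r s p holomorphic_on branch_dom r s - {p}"
  unfolding alpha_ratio_def using assms branch_root_nonzero[OF assms]
  by (intro holomorphic_intros holomorphic_on_subset[OF holomorphic_on_branch_root]) auto

lemma open_Collect_not_nonpos_Reals:
  fixes f :: "'a::topological_space \<Rightarrow> complex"
  assumes "open D" "continuous_on D f"
  shows "open {x \<in> D. f x \<notin> \<real>\<^sub>\<le>\<^sub>0}"
proof -
  have "open (D \<inter> f -` (- \<real>\<^sub>\<le>\<^sub>0))"
    using assms by (intro continuous_open_preimage open_Compl closed_nonpos_Reals_complex)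
  moreover have "D \<inter> f -` (- \<real>\<^sub>\<le>\<^sub>0) = {x \<in> D. f x \<notin> \<real>\<^sub>\<le>\<^sub>0}"
    by auto
  ultimately show ?thesis
    by simp
qed

lemma open_Collect_mem_branch_dom:
  assumes "open D" "continuous_on D r" "continuous_on D s" "continuous_on D z"
    and "\<And>x. x \<in> D \<Longrightarrow> s x \<noteq> 0 \<and> z x \<noteq> 0"
  shows "open {x \<in> D. z x \<in> branch_dom (r x) (s x)}"
proof -
  have "{x \<in> D. z x \<in> branch_dom (r x) (s x)} =
      {x \<in> {x \<in> D. 1 - r x / (z x)^2 \<notin> \<real>\<^sub>\<le>\<^sub>0}. 1 - (z x)^2 / s x \<notin> \<real>\<^sub>\<le>\<^sub>0}"
    using assms(5) by (auto simp: mem_branch_dom_iff)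
  also have "open \<dots>"
    using assms
    by (intro open_Collect_not_nonpos_Reals continuous_intros) (auto intro: continuous_on_subset)
  finally show ?thesis .
qed

lemma isCont_alpha_ratio:
  assumes "isCont r x" "isCont s x" "isCont z x"
    and "s x \<noteq> 0" "p \<in> branch_dom (r x) (s x)" "z x \<in> branch_dom (r x) (s x)" "z x \<noteq> p"
  shows "isCont (\<lambda>x. alpha_ratio (r x) (s x) p (z x)) x"
  using assms branch_root_nonzero[OF assms(4,6)]
  unfolding alpha_ratio_def branch_root_def
  by (intro continuous_intros isCont_csqrt') (auto simp: mem_branch_dom_iff)

lemma alpha_log_derivative_identity:
  fixes a b wp wz z p :: complex
  assumes "a \<noteq> 0" "b \<noteq> 0" "z \<noteq> p" "wz \<noteq> 0" "b - a = (p - z) * (p + z)"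
  shows "wp / ((z - p) * wz) * ((1 / a - 1 / b) / 2) = - wp / (2 * b) * ((z + p) / (a * wz))"
proof -
  have diff: "1 / a - 1 / b = (p - z) * (p + z) / (a * b)"
    using assms by (simp add: field_simps)
  show ?thesis
    unfolding diff using assms(1-4) by (simp add: field_simps)
qed

section \<open>The setting of the theorem, for one component of phi\<close>

locale elliptic_setting =
  fixes r s p :: complex and \<rho> R :: real and \<gamma>0 \<gamma>1 :: "real \<Rightarrow> complex" and \<psi> :: "complex \<Rightarrow> complex"
  assumes r_lt_s: "norm r < norm s"
    and sqrt_r_lt: "norm (csqrt r) < \<rho>" and sqrt_s_gt: "R < norm (csqrt s)" and R_pos: "0 < R"
    and \<psi>_hol: "\<psi> holomorphic_on ball 0 \<rho>" "\<psi> holomorphic_on {z. R < norm z}"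
    and \<psi>_odd: "\<And>z. z \<in> ball 0 \<rho> \<Longrightarrow> \<psi> (- z) = - \<psi> z" "\<And>z. R < norm z \<Longrightarrow> \<psi> (- z) = - \<psi> z"
    and \<gamma>0: "valid_path \<gamma>0" "pathfinish \<gamma>0 = pathstart \<gamma>0"
      "path_image \<gamma>0 \<subseteq> ball 0 \<rho> \<inter> branch_dom r s"
    and \<gamma>0_cut0: "\<And>z. z \<in> cut0 r \<Longrightarrow> winding_number \<gamma>0 z = 1"
    and \<gamma>1: "valid_path \<gamma>1" "pathfinish \<gamma>1 = pathstart \<gamma>1"
      "path_image \<gamma>1 \<subseteq> {z. R < norm z} \<inter> branch_dom r s"
    and \<gamma>1_cutinf: "\<And>z. z \<in> cutinf s \<Longrightarrow> winding_number \<gamma>1 z = 0"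
    and p: "p \<in> branch_dom r s" "p \<notin> path_image \<gamma>0 \<union> path_image \<gamma>1"
begin

abbreviation N :: "complex set" where "N \<equiv> ball 0 \<rho> \<union> {z. R < norm z}"

lemma s_nonzero: "s \<noteq> 0"
  using r_lt_s by auto

lemma norm_csqrt_r_lt: "norm (csqrt r) < norm (csqrt s)"
  using r_lt_s by simp

lemma open_exterior: "open {z :: complex. R < norm z}"
  by (intro open_Collect_less continuous_intros)

lemma winding_number_\<gamma>0_cutinf:
  assumes "w \<in> cutinf s"
  shows "winding_number \<gamma>0 w = 0"
proof (rule winding_number_zero_if_unbounded_connected[OF valid_path_imp_path[OF \<gamma>0(1)] \<gamma>0(2)])
  let ?C = "(\<lambda>k. of_real k * w) ` {1..}"
  show "connected ?C"
    by (intro connected_continuous_image continuous_intros) auto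
  show "?C \<inter> path_image \<gamma>0 = {}"
    using scaled_mem_cutinf[OF _ assms] \<gamma>0(3) by (auto simp: branch_dom_def)
  show "w \<in> ?C"
    by (rule image_eqI[of _ _ 1]) auto
  have "w \<noteq> 0"
    using norm_ge_if_mem_cutinf[OF assms] sqrt_s_gt R_pos by auto
  show "\<not> bounded ?C"
  proof
    assume "bounded ?C"
    then obtain B where B: "\<And>x. x \<in> ?C \<Longrightarrow> norm x \<le> B"
      by (auto simp: bounded_iff)
    define k where "k = max 1 ((\<bar>B\<bar> + 1) / norm w)"
    have "norm (of_real k * w) \<le> B"
      by (intro B imageI) (simp add: k_def)
    moreover have "(\<bar>B\<bar> + 1) / norm w \<le> k"
      by (simp add: k_def)
    then have "\<bar>B\<bar> + 1 \<le> k * norm w"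
      using \<open>w \<noteq> 0\<close> by (simp add: pos_divide_le_eq)
    ultimately show False
      by (simp add: norm_mult k_def)
  qed
qed

lemma contour_integral_\<gamma>0_even_eq_0:
  assumes "g holomorphic_on ball 0 \<rho> \<inter> branch_dom r s"
    and "\<And>z. z \<in> ball 0 \<rho> \<inter> branch_dom r s \<Longrightarrow> g (- z) = g z"
  shows "contour_integral \<gamma>0 g = 0"
proof (rule contour_integral_even_eq_0[OF _ _ _ assms \<gamma>0(1-3)])
  show "open (ball 0 \<rho> \<inter> branch_dom r s)"
    using open_branch_dom[OF s_nonzero] by blast
  define c where "c = (norm (csqrt r) + min \<rho> (norm (csqrt s))) / 2"
  have "connected ({z. norm z \<in> {..<\<rho>}} \<inter> branch_dom r s)"
    using norm_csqrt_r_lt sqrt_r_lt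
    by (intro connected_annulus_Int_branch_dom[of r c] is_interval_io) (auto simp: c_def min_def)
  moreover have "{z. norm z \<in> {..<\<rho>}} = ball (0::complex) \<rho>"
    by auto
  ultimately show "connected (ball 0 \<rho> \<inter> branch_dom r s)"
    by simp
  show "- z \<in> ball 0 \<rho> \<inter> branch_dom r s" if "z \<in> ball 0 \<rho> \<inter> branch_dom r s" for z
    using that by simp
  fix w assume w: "w \<notin> ball 0 \<rho> \<inter> branch_dom r s"
  have path: "path \<gamma>0" "path_image \<gamma>0 \<subseteq> ball 0 \<rho>"
    using \<gamma>0 valid_path_imp_path by auto
  consider "w \<notin> ball 0 \<rho>" | "w \<in> cut0 r" | "w \<in> cutinf s"
    using w by (auto simp: branch_dom_def)
  then show "winding_number \<gamma>0 (- w) = winding_number \<gamma>0 w"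
  proof cases
    case 1
    then show ?thesis
      using winding_number_zero_outside[OF path(1) convex_ball \<gamma>0(2) _ path(2)] by simp
  next
    case 2
    then show ?thesis
      using \<gamma>0_cut0 by simp
  next
    case 3
    then show ?thesis
      using winding_number_\<gamma>0_cutinf by simp
  qed
qed

lemma contour_integral_\<gamma>1_even_eq_0:
  assumes "g holomorphic_on {z. R < norm z} \<inter> branch_dom r s"
    and "\<And>z. z \<in> {z. R < norm z} \<inter> branch_dom r s \<Longrightarrow> g (- z) = g z"
  shows "contour_integral \<gamma>1 g = 0"
proof (rule contour_integral_even_eq_0[OF _ _ _ assms \<gamma>1(1-3)])
  show "open ({z. R < norm z} \<inter> branch_dom r s)"
    using open_branch_dom[OF s_nonzero] open_exterior by blast
  define c where "c = (max R (norm (csqrt r)) + norm (csqrt s)) / 2"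
  have "connected ({z. norm z \<in> {R<..}} \<inter> branch_dom r s)"
    using norm_csqrt_r_lt sqrt_s_gt
    by (intro connected_annulus_Int_branch_dom[of r c] is_interval_oi) (auto simp: c_def max_def)
  then show "connected ({z. R < norm z} \<inter> branch_dom r s)"
    by simp
  show "- z \<in> {z. R < norm z} \<inter> branch_dom r s" if "z \<in> {z. R < norm z} \<inter> branch_dom r s" for z
    using that by simp
  fix w assume w: "w \<notin> {z. R < norm z} \<inter> branch_dom r s"
  consider "w \<in> cball 0 R \<union> cut0 r" | "w \<in> cutinf s"
    using w by (force simp: branch_dom_def)
  then show "winding_number \<gamma>1 (- w) = winding_number \<gamma>1 w"
  proof cases
    case 1
    have "0 \<in> cball 0 R \<inter> cut0 r"
      using R_pos by (simp add: mem_cut0_iff_nonpos_Reals)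
    then have "connected (cball 0 R \<union> cut0 r)"
      unfolding cut0_def by (intro connected_Un connected_cball connected_segment) blast
    moreover have "(cball 0 R \<union> cut0 r) \<inter> path_image \<gamma>1 = {}"
      using \<gamma>1(3) by (auto simp: branch_dom_def)
    ultimately show ?thesis
      using 1 valid_path_imp_path[OF \<gamma>1(1)] \<gamma>1(2) by (intro winding_number_eq) auto
  next
    case 2
    then show ?thesis
      using \<gamma>1_cutinf by simp
  qed
qed

lemma cint_even_eq_0:
  assumes "c \<in> {r, s}"
  shows "cint \<gamma>0 \<gamma>1 (\<lambda>z. \<psi> z / ((z^2 - c) * wbr r s z)) = 0"
proof -
  define g where "g = (\<lambda>z. \<psi> z / ((z^2 - c) * wbr r s z))"
  have "(z^2 - c) * wbr r s z \<noteq> 0" if "z \<in> branch_dom r s" for z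
    using assms branch_dom_square_neq[OF s_nonzero that] wbr_nonzero[OF s_nonzero that] by auto
  then have hol: "g holomorphic_on U \<inter> branch_dom r s" if "\<psi> holomorphic_on U" for U
    unfolding g_def using that
    by (intro holomorphic_intros holomorphic_on_subset[OF holomorphic_on_wbr[OF s_nonzero]]) auto
  have even: "g (- z) = g z" if "z \<in> branch_dom r s" "\<psi> (- z) = - \<psi> z" for z
    unfolding g_def using that wbr_minus[OF r_lt_s that(1)] by simp
  have "contour_integral \<gamma>0 g = 0"
    using hol[OF \<psi>_hol(1)] even \<psi>_odd(1) by (intro contour_integral_\<gamma>0_even_eq_0) auto
  moreover have "contour_integral \<gamma>1 g = 0"
    using hol[OF \<psi>_hol(2)] even \<psi>_odd(2) by (intro contour_integral_\<gamma>1_even_eq_0) auto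
  ultimately show ?thesis
    by (simp add: cint_def flip: g_def)
qed

lemma path_images_subset: "path_image \<gamma>0 \<union> path_image \<gamma>1 \<subseteq> N \<inter> branch_dom r s"
  using \<gamma>0(3) \<gamma>1(3) by blast

lemma holomorphic_on_\<psi>: "\<psi> holomorphic_on N"
  using \<psi>_hol open_exterior by (intro holomorphic_on_Un) auto

lemma isCont_\<psi>: "z \<in> N \<Longrightarrow> isCont \<psi> z"
  using holomorphic_on_imp_continuous_on[OF holomorphic_on_\<psi>] open_exterior
  by (simp add: continuous_on_eq_continuous_at open_Un)

lemma open_N_Int_branch_dom_diff:
  assumes "s' \<noteq> 0"
  shows "open (N \<inter> (branch_dom r' s' - {p}))"
  using open_branch_dom[OF assms] open_exterior by (intro open_Int open_Un open_Diff) auto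

lemma holomorphic_on_alpha_integrand:
  assumes "s' \<noteq> 0"
  shows "(\<lambda>z. \<psi> z * alpha_ratio r' s' p z) holomorphic_on N \<inter> (branch_dom r' s' - {p})"
  by (intro holomorphic_intros holomorphic_on_subset[OF holomorphic_on_\<psi>]
      holomorphic_on_subset[OF holomorphic_on_alpha_ratio[OF assms]]) auto

lemma field_differentiable_alpha_integrand:
  assumes "s' \<noteq> 0" "z \<in> N" "z \<in> branch_dom r' s'" "z \<noteq> p"
  shows "(\<lambda>z. \<psi> z * alpha_ratio r' s' p z) field_differentiable at z"
  using assms(2-4)
  by (intro holomorphic_on_imp_differentiable_at[OF holomorphic_on_alpha_integrand[OF assms(1)]
        open_N_Int_branch_dom_diff[OF assms(1)]]) auto

lemma field_differentiable_alpha_derivative_integrand: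
  assumes "s' \<noteq> 0" "z \<in> N" "z \<in> branch_dom r' s'" "z \<noteq> p"
    and "c = r' \<or> c = s'" "p^2 \<noteq> c"
  shows "(\<lambda>z. \<psi> z * (alpha_ratio r' s' p z * ((1 / (z^2 - c) - 1 / (p^2 - c)) / 2)))
    field_differentiable at z"
proof -
  define U where "U = N \<inter> (branch_dom r' s' - {p})"
  have "w^2 - c \<noteq> 0" if "w \<in> U" for w
    using that assms(1,5) branch_dom_square_neq[OF assms(1)] by (auto simp: U_def)
  then have "(\<lambda>z. (1 / (z^2 - c) - 1 / (p^2 - c)) / 2) holomorphic_on U"
    using assms(6) by (intro holomorphic_intros) auto
  then have
    "(\<lambda>z. \<psi> z * alpha_ratio r' s' p z * ((1 / (z^2 - c) - 1 / (p^2 - c)) / 2)) holomorphic_on U"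
    unfolding U_def by (rule holomorphic_on_mult[OF holomorphic_on_alpha_integrand[OF assms(1)]])
  moreover have "open U" "z \<in> U"
    using assms(2-4) open_N_Int_branch_dom_diff[OF assms(1)] by (auto simp: U_def)
  ultimately show ?thesis
    unfolding mult.assoc by (rule holomorphic_on_imp_differentiable_at)
qed

definition admissible :: "((complex \<times> complex) \<times> complex) set" where
  "admissible = {((r', s'), z). norm r' < norm s' \<and> z \<in> N - {p} \<and>
    p \<in> branch_dom r' s' \<and> z \<in> branch_dom r' s'}"

lemma mem_admissible_iff:
  "(q, z) \<in> admissible \<longleftrightarrow> norm (fst q) < norm (snd q) \<and> z \<in> N - {p} \<and>
    p \<in> branch_dom (fst q) (snd q) \<and> z \<in> branch_dom (fst q) (snd q)"
  by (cases q) (simp add: admissible_def)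

lemma open_admissible: "open admissible"
proof -
  define D :: "((complex \<times> complex) \<times> complex) set"
    where "D = {q. norm (fst q) < norm (snd q)} \<times> (N - {0, p})"
  have "p \<noteq> 0"
    using p(1) zero_notin_branch_dom by blast
  have "open D"
    unfolding D_def using open_exterior
    by (intro open_Times open_Diff open_Un open_Collect_less continuous_intros) auto
  then have "open {x \<in> {x \<in> D. p \<in> branch_dom (fst (fst x)) (snd (fst x))}.
      snd x \<in> branch_dom (fst (fst x)) (snd (fst x))}"
    using \<open>p \<noteq> 0\<close> by (intro open_Collect_mem_branch_dom continuous_intros) (auto simp: D_def)
  also have "{x \<in> {x \<in> D. p \<in> branch_dom (fst (fst x)) (snd (fst x))}.
      snd x \<in> branch_dom (fst (fst x)) (snd (fst x))} = admissible"
    by (auto simp: mem_admissible_iff D_def zero_notin_branch_dom)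
  finally show ?thesis .
qed

lemma admissible_square_neq:
  assumes "((r', s'), z) \<in> admissible"
  shows "s' \<noteq> 0" "z^2 \<noteq> r'" "z^2 \<noteq> s'" "p^2 \<noteq> r'" "p^2 \<noteq> s'"
proof -
  have mem: "p \<in> branch_dom r' s'" "z \<in> branch_dom r' s'" and "norm r' < norm s'"
    using assms by (auto simp: admissible_def)
  then show "s' \<noteq> 0"
    by auto
  then show "z^2 \<noteq> r'" "z^2 \<noteq> s'" "p^2 \<noteq> r'" "p^2 \<noteq> s'"
    using branch_dom_square_neq mem by blast+
qed

lemma isCont_alpha_derivative_integrand:
  assumes "isCont P y" "(P y, z) \<in> admissible" "y = fst (P y) \<or> y = snd (P y)"
  shows "isCont (\<lambda>(y, z). \<psi> z * (alpha_ratio (fst (P y)) (snd (P y)) p z *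
    ((1 / (z^2 - y) - 1 / (p^2 - y)) / 2))) (y, z)"
proof -
  have "isCont (\<lambda>x. P (fst x)) (y, z)"
    using isCont_o2[of "(y, z)" fst P] assms(1) by (simp add: continuous_intros)
  then have "isCont (\<lambda>x. alpha_ratio (fst (P (fst x))) (snd (P (fst x))) p (snd x)) (y, z)"
    using assms(2) admissible_square_neq(1)[of "fst (P y)" "snd (P y)" z]
    by (intro isCont_alpha_ratio continuous_intros) (auto simp: mem_admissible_iff)
  moreover have "isCont (\<lambda>x. \<psi> (snd x)) (y, z)"
    using isCont_o2[of "(y, z)" snd \<psi>] assms(2) isCont_\<psi>
    by (simp add: continuous_intros mem_admissible_iff)
  moreover have "z^2 \<noteq> y" "p^2 \<noteq> y"
    using assms(3) admissible_square_neq[of "fst (P y)" "snd (P y)" z] assms(2) by auto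
  ultimately show ?thesis
    unfolding case_prod_unfold by (intro continuous_mult continuous_intros) auto
qed

text \<open>
  P moves the parameter pair along one coordinate line, P y = (y, s) or P y = (r, y).
\<close>

lemma has_field_derivative_cint_alpha_coeff_along:
  fixes P :: "complex \<Rightarrow> complex \<times> complex"
  assumes P: "continuous_on UNIV P" "P c = (r, s)" "\<And>y. y = fst (P y) \<or> y = snd (P y)"
    and der: "\<And>y z. snd (P y) \<noteq> 0 \<Longrightarrow> p \<in> branch_dom (fst (P y)) (snd (P y)) \<Longrightarrow>
      z \<in> branch_dom (fst (P y)) (snd (P y)) \<Longrightarrow> z \<noteq> p \<Longrightarrow>
      ((\<lambda>y. alpha_ratio (fst (P y)) (snd (P y)) p z) has_field_derivative
        alpha_ratio (fst (P y)) (snd (P y)) p z * ((1 / (z^2 - y) - 1 / (p^2 - y)) / 2)) (at y)"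
  shows "((\<lambda>y. cint \<gamma>0 \<gamma>1 (\<lambda>z. \<psi> z * alpha_coeff (fst (P y)) (snd (P y)) p z)) has_field_derivative
    cint \<gamma>0 \<gamma>1 (\<lambda>z. \<psi> z * (alpha_ratio r s p z * ((1 / (z^2 - c) - 1 / (p^2 - c)) / 2)))) (at c)"
proof -
  define G where "G = (\<lambda>(y, z). (P y, z)) -` admissible"
  have G: "(y, z) \<in> G \<longleftrightarrow> (P y, z) \<in> admissible" for y z
    by (simp add: G_def)
  have "((\<lambda>y. cint \<gamma>0 \<gamma>1 (\<lambda>z. \<psi> z * alpha_coeff (fst (P y)) (snd (P y)) p z)) has_field_derivative
      cint \<gamma>0 \<gamma>1 (\<lambda>z. \<psi> z * (alpha_ratio (fst (P c)) (snd (P c)) p z *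
        ((1 / (z^2 - c) - 1 / (p^2 - c)) / 2)))) (at c)"
  proof (rule has_field_derivative_cint_family[where G = G
        and a = "\<lambda>y z. \<psi> z * alpha_ratio (fst (P y)) (snd (P y)) p z"
        and a' = "\<lambda>y z. \<psi> z * (alpha_ratio (fst (P y)) (snd (P y)) p z *
          ((1 / (z^2 - y) - 1 / (p^2 - y)) / 2))"])
    have "continuous_on UNIV (\<lambda>x :: complex \<times> complex. P (fst x))"
      by (rule continuous_on_compose2[OF P(1) continuous_on_fst[OF continuous_on_id]]) simp
    then show "open G"
      unfolding G_def case_prod_unfold using open_admissible by (intro open_vimage continuous_intros)
    show "{c} \<times> (path_image \<gamma>0 \<union> path_image \<gamma>1) \<subseteq> G"
    proof
      fix x assume "x \<in> {c} \<times> (path_image \<gamma>0 \<union> path_image \<gamma>1)"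
      then obtain z where "x = (c, z)" "z \<in> N \<inter> branch_dom r s" "z \<noteq> p"
        using path_images_subset p(2) by blast
      then show "x \<in> G"
        using p(1) r_lt_s P(2) by (simp add: G mem_admissible_iff)
    qed
    show "valid_path \<gamma>0" "valid_path \<gamma>1"
      using \<gamma>0(1) \<gamma>1(1) .
    show "\<psi> z * alpha_coeff (fst (P y)) (snd (P y)) p z = \<psi> z * alpha_ratio (fst (P y)) (snd (P y)) p z"
      if "(y, z) \<in> G" for y z
      using that by (simp add: G mem_admissible_iff alpha_coeff_eq_alpha_ratio)
    show "(\<lambda>z. \<psi> z * alpha_ratio (fst (P y)) (snd (P y)) p z) field_differentiable at z"
      if "(y, z) \<in> G" for y z
      using that admissible_square_neq(1)
      by (intro field_differentiable_alpha_integrand) (auto simp: G mem_admissible_iff)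
    show "(\<lambda>z. \<psi> z * (alpha_ratio (fst (P c)) (snd (P c)) p z * ((1 / (z^2 - c) - 1 / (p^2 - c)) / 2)))
        field_differentiable at z" if "(c, z) \<in> G" for z
      using that P(3)[of c] admissible_square_neq[of "fst (P c)" "snd (P c)" z]
      by (intro field_differentiable_alpha_derivative_integrand) (auto simp: G mem_admissible_iff)
    show "((\<lambda>y. \<psi> z * alpha_ratio (fst (P y)) (snd (P y)) p z) has_field_derivative
        \<psi> z * (alpha_ratio (fst (P y)) (snd (P y)) p z * ((1 / (z^2 - y) - 1 / (p^2 - y)) / 2))) (at y)"
      if "(y, z) \<in> G" for y z
      using that admissible_square_neq(1) by (intro DERIV_cmult der) (auto simp: G mem_admissible_iff)
    show "continuous_on G (\<lambda>(y, z). \<psi> z * (alpha_ratio (fst (P y)) (snd (P y)) p z *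
        ((1 / (z^2 - y) - 1 / (p^2 - y)) / 2)))"
    proof (rule continuous_at_imp_continuous_on, clarify)
      fix y z assume "(y, z) \<in> G"
      then show "isCont (\<lambda>(y, z). \<psi> z * (alpha_ratio (fst (P y)) (snd (P y)) p z *
          ((1 / (z^2 - y) - 1 / (p^2 - y)) / 2))) (y, z)"
        using P(1,3)
        by (intro isCont_alpha_derivative_integrand) (auto simp: G continuous_on_eq_continuous_at)
    qed
  qed
  then show ?thesis
    by (simp add: P(2))
qed

lemma has_field_derivative_cint_alpha_coeff_r:
  "((\<lambda>y. cint \<gamma>0 \<gamma>1 (\<lambda>z. \<psi> z * alpha_coeff y s p z)) has_field_derivative
    cint \<gamma>0 \<gamma>1 (\<lambda>z. \<psi> z * (alpha_ratio r s p z * ((1 / (z^2 - r) - 1 / (p^2 - r)) / 2)))) (at r)"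
proof (rule has_field_derivative_cint_alpha_coeff_along[where P = "\<lambda>y. (y, s)" and c = r,
      unfolded fst_conv snd_conv, OF _ _ _ has_field_derivative_alpha_ratio_r])
  show "continuous_on UNIV (\<lambda>y. (y, s))"
    by (intro continuous_intros)
qed simp_all

lemma has_field_derivative_cint_alpha_coeff_s:
  "((\<lambda>y. cint \<gamma>0 \<gamma>1 (\<lambda>z. \<psi> z * alpha_coeff r y p z)) has_field_derivative
    cint \<gamma>0 \<gamma>1 (\<lambda>z. \<psi> z * (alpha_ratio r s p z * ((1 / (z^2 - s) - 1 / (p^2 - s)) / 2)))) (at s)"
proof (rule has_field_derivative_cint_alpha_coeff_along[where P = "\<lambda>y. (r, y)" and c = s,
      unfolded fst_conv snd_conv, OF _ _ _ has_field_derivative_alpha_ratio_s])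
  show "continuous_on UNIV (\<lambda>y. (r, y))"
    by (intro continuous_intros)
qed simp_all

lemma alpha_ratio_log_derivative_eq:
  assumes "c \<in> {r, s}" "z \<in> branch_dom r s" "z \<noteq> p"
  shows "alpha_ratio r s p z * ((1 / (z^2 - c) - 1 / (p^2 - c)) / 2) =
    - wbr r s p / (2 * (p^2 - c)) * ((z + p) / ((z^2 - c) * wbr r s z))"
proof -
  have sq: "z^2 \<noteq> c" "p^2 \<noteq> c"
    using assms(1) branch_dom_square_neq[OF s_nonzero assms(2)] branch_dom_square_neq[OF s_nonzero p(1)]
    by auto
  have "alpha_ratio r s p z = wbr r s p / ((z - p) * wbr r s z)"
    using alpha_coeff_eq_alpha_ratio[OF r_lt_s p(1) assms(2)] by (simp add: alpha_coeff_def)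
  moreover have "(p^2 - c) - (z^2 - c) = (p - z) * (p + z)"
    by (simp add: power2_eq_square algebra_simps)
  ultimately show ?thesis
    using assms(3) sq wbr_nonzero[OF s_nonzero assms(2)]
    by (simp only:) (rule alpha_log_derivative_identity; simp)
qed

lemma cint_alpha_ratio_log_derivative:
  assumes "c \<in> {r, s}"
  shows "cint \<gamma>0 \<gamma>1 (\<lambda>z. \<psi> z * (alpha_ratio r s p z * ((1 / (z^2 - c) - 1 / (p^2 - c)) / 2))) =
    - wbr r s p / (2 * (p^2 - c)) * cint \<gamma>0 \<gamma>1 (\<lambda>z. z * \<psi> z / ((z^2 - c) * wbr r s z))"
proof -
  define f1 where "f1 = (\<lambda>z. z * \<psi> z / ((z^2 - c) * wbr r s z))"
  define f2 where "f2 = (\<lambda>z. \<psi> z / ((z^2 - c) * wbr r s z))"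
  define k where "k = - wbr r s p / (2 * (p^2 - c))"
  have sq: "z^2 \<noteq> c" if "z \<in> branch_dom r s" for z
    using assms branch_dom_square_neq[OF s_nonzero that] by auto
  have integrand:
    "\<psi> z * (alpha_ratio r s p z * ((1 / (z^2 - c) - 1 / (p^2 - c)) / 2)) = k * (f1 z + p * f2 z)"
    if "z \<in> path_image \<gamma>0 \<union> path_image \<gamma>1" for z
  proof -
    have "z \<in> branch_dom r s" "z \<noteq> p"
      using that path_images_subset p(2) by auto
    then show ?thesis
      unfolding alpha_ratio_log_derivative_eq[OF assms \<open>z \<in> branch_dom r s\<close> \<open>z \<noteq> p\<close>] k_def f1_def f2_def
      by (simp add: add_divide_distrib ring_distribs mult_ac)
  qed
  define U where "U = N \<inter> (branch_dom r s - {p})"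
  have "open U"
    unfolding U_def by (rule open_N_Int_branch_dom_diff[OF s_nonzero])
  have "f1 holomorphic_on U" "f2 holomorphic_on U"
    unfolding f1_def f2_def U_def using sq wbr_nonzero[OF s_nonzero]
    by (auto intro!: holomorphic_intros holomorphic_on_subset[OF holomorphic_on_wbr[OF s_nonzero]]
        holomorphic_on_subset[OF holomorphic_on_\<psi>])
  moreover have "path_image \<gamma>0 \<subseteq> U" "path_image \<gamma>1 \<subseteq> U"
    using path_images_subset p(2) by (auto simp: U_def)
  ultimately have integrable: "f1 contour_integrable_on \<gamma>0" "f2 contour_integrable_on \<gamma>0"
    "f1 contour_integrable_on \<gamma>1" "f2 contour_integrable_on \<gamma>1"
    using \<open>open U\<close> \<gamma>0(1) \<gamma>1(1) by (auto intro: contour_integrable_holomorphic_simple)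
  have "cint \<gamma>0 \<gamma>1 (\<lambda>z. \<psi> z * (alpha_ratio r s p z * ((1 / (z^2 - c) - 1 / (p^2 - c)) / 2))) =
      cint \<gamma>0 \<gamma>1 (\<lambda>z. k * (f1 z + p * f2 z))"
    unfolding cint_def using integrand by (intro arg_cong2[where f = "(+)"] contour_integral_cong) auto
  also have "\<dots> = k * (cint \<gamma>0 \<gamma>1 f1 + p * cint \<gamma>0 \<gamma>1 f2)"
    using integrable
    by (simp add: cint_def contour_integral_lmul contour_integral_add contour_integrable_lmul
        algebra_simps)
  also have "cint \<gamma>0 \<gamma>1 f2 = 0"
    unfolding f2_def using assms by (rule cint_even_eq_0)
  finally show ?thesis
    by (simp add: k_def f1_def)
qed

lemma has_field_derivative_f_r:
  "((\<lambda>r'. 1 / (4 * pi * \<i>) * cint \<gamma>0 \<gamma>1 (\<lambda>z. \<psi> z * alpha_coeff r' s p z)) has_field_derivative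
    - 1 / (8 * pi * \<i>) * cint \<gamma>0 \<gamma>1 (\<lambda>z. z * \<psi> z / ((z^2 - r) * wbr r s z)) * (wbr r s p / (p^2 - r)))
    (at r)"
  by (rule DERIV_cong[OF DERIV_cmult[OF has_field_derivative_cint_alpha_coeff_r]])
    (unfold cint_alpha_ratio_log_derivative[of r, OF insertI1], simp add: field_simps)

lemma has_field_derivative_f_s:
  "((\<lambda>s'. 1 / (4 * pi * \<i>) * cint \<gamma>0 \<gamma>1 (\<lambda>z. \<psi> z * alpha_coeff r s' p z)) has_field_derivative
    - 1 / (8 * pi * \<i>) * cint \<gamma>0 \<gamma>1 (\<lambda>z. z * \<psi> z / ((z^2 - s) * wbr r s z)) * (wbr r s p / (p^2 - s)))
    (at s)"
  by (rule DERIV_cong[OF DERIV_cmult[OF has_field_derivative_cint_alpha_coeff_s]])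
    (unfold cint_alpha_ratio_log_derivative[of s, OF insertI2[OF singletonI]], simp add: field_simps)

end

theorem lemma4p3:
  fixes \<phi> :: "complex \<Rightarrow> complex \<times> complex"
    and \<rho> R :: real
    and \<gamma>0 \<gamma>1 :: "real \<Rightarrow> complex"
    and r s p :: complex
  assumes rho_pos: "0 < \<rho>" and R_pos: "0 < R"
    \<comment> \<open>N_0 = ball 0 rho, N_infinity = {z. R < norm z} plus infinity\<close>
    and phi_hol0: "\<forall>\<pi>\<in>{fst, snd}. (\<lambda>z. \<pi> (\<phi> z)) holomorphic_on ball 0 \<rho>"
    and phi_holinf: "\<forall>\<pi>\<in>{fst, snd}. (\<lambda>z. \<pi> (\<phi> z)) holomorphic_on {z. R < norm z}"
    and phi_hol_at_inf: "\<forall>\<pi>\<in>{fst, snd}. \<exists>c.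
           (\<lambda>u. if u = 0 then c else \<pi> (\<phi> (inverse u))) holomorphic_on ball 0 (inverse R)"
    and phi_odd0: "\<forall>z\<in>ball 0 \<rho>. \<phi> (- z) = - \<phi> z"
    and phi_oddinf: "\<forall>z. R < norm z \<longrightarrow> \<phi> (- z) = - \<phi> z"
    and r_ne: "r \<noteq> 0" and rs_ne: "r \<noteq> s"
    and sqrt_r_in: "norm (csqrt r) < \<rho>"
    and sqrt_s_in: "R < norm (csqrt s)"
    and r_near0_s_nearinf: "norm r < norm s"
    \<comment> \<open>the loop in N_0 encircling the cut from sqrt r to - sqrt r\<close>
    and g0_valid: "valid_path \<gamma>0" and g0_closed: "pathfinish \<gamma>0 = pathstart \<gamma>0"
    and g0_image: "path_image \<gamma>0 \<subseteq> ball 0 \<rho> \<inter> branch_dom r s"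
    and g0_encircles: "\<forall>z\<in>cut0 r. winding_number \<gamma>0 z = 1"
    \<comment> \<open>the loop in N_infinity encircling the cut from sqrt s to - sqrt s through infinity
        (positively oriented as seen from infinity, i.e. clockwise in the z-plane)\<close>
    and g1_valid: "valid_path \<gamma>1" and g1_closed: "pathfinish \<gamma>1 = pathstart \<gamma>1"
    and g1_image: "path_image \<gamma>1 \<subseteq> {z. R < norm z} \<inter> branch_dom r s"
    and g1_encircles: "\<forall>z\<in>cutinf s. winding_number \<gamma>1 z = 0"
    and g1_around0: "winding_number \<gamma>1 0 = -1"
    \<comment> \<open>p lies in the region outside both loops\<close>
    and p_notin: "p \<notin> path_image \<gamma>0 \<union> path_image \<gamma>1"
    and p_out0: "winding_number \<gamma>0 p = 0"
    and p_out1: "winding_number \<gamma>1 p = -1"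
  shows "\<forall>\<pi>\<in>{fst, snd}.
      ((\<lambda>r'. \<pi> (f_rs \<phi> \<gamma>0 \<gamma>1 r' s p)) has_field_derivative
          \<pi> (A_coef \<phi> \<gamma>0 \<gamma>1 r s) * (wbr r s p / (p^2 - r))) (at r) \<and>
      ((\<lambda>s'. \<pi> (f_rs \<phi> \<gamma>0 \<gamma>1 r s' p)) has_field_derivative
          \<pi> (B_coef \<phi> \<gamma>0 \<gamma>1 r s) * (wbr r s p / (p^2 - s))) (at s)"
proof -
  \<comment> \<open>The computation is local to the loops.\<close>
  have "p \<in> branch_dom r s"
    using g0_encircles p_out0 g1_encircles p_out1 by (auto simp: branch_dom_def)
  show ?thesis
  proof (intro ballI conjI)
    fix \<pi> :: "complex \<times> complex \<Rightarrow> complex"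
    assume \<pi>: "\<pi> \<in> {fst, snd}"
    interpret elliptic_setting r s p \<rho> R \<gamma>0 \<gamma>1 "\<lambda>z. \<pi> (\<phi> z)"
      using \<pi> phi_hol0 phi_holinf phi_odd0 phi_oddinf r_near0_s_nearinf sqrt_r_in sqrt_s_in R_pos
        g0_valid g0_closed g0_image g0_encircles g1_valid g1_closed g1_image g1_encircles
        \<open>p \<in> branch_dom r s\<close> p_notin
      by unfold_locales auto
    have f: "\<pi> (f_rs \<phi> \<gamma>0 \<gamma>1 r' s' p) =
        1 / (4 * pi * \<i>) * cint \<gamma>0 \<gamma>1 (\<lambda>z. \<pi> (\<phi> z) * alpha_coeff r' s' p z)" for r' s'
      using \<pi> by (auto simp: f_rs_def)
    have A: "\<pi> (A_coef \<phi> \<gamma>0 \<gamma>1 r s) =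
        - 1 / (8 * pi * \<i>) * cint \<gamma>0 \<gamma>1 (\<lambda>z. z * \<pi> (\<phi> z) / ((z^2 - r) * wbr r s z))"
      and B: "\<pi> (B_coef \<phi> \<gamma>0 \<gamma>1 r s) =
        - 1 / (8 * pi * \<i>) * cint \<gamma>0 \<gamma>1 (\<lambda>z. z * \<pi> (\<phi> z) / ((z^2 - s) * wbr r s z))"
      using \<pi> by (auto simp: A_coef_def B_coef_def)
    show "((\<lambda>r'. \<pi> (f_rs \<phi> \<gamma>0 \<gamma>1 r' s p)) has_field_derivative
        \<pi> (A_coef \<phi> \<gamma>0 \<gamma>1 r s) * (wbr r s p / (p^2 - r))) (at r)"
      unfolding f A by (rule has_field_derivative_f_r)
    show "((\<lambda>s'. \<pi> (f_rs \<phi> \<gamma>0 \<gamma>1 r s' p)) has_field_derivative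
        \<pi> (B_coef \<phi> \<gamma>0 \<gamma>1 r s) * (wbr r s p / (p^2 - s))) (at s)"
      unfolding f B by (rule has_field_derivative_f_s)
  qed
qed

end
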